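(* Let $S$ be a finite poset such that every stochastically monotone discrete-time Markov chain on $S$ is realizably monotone. Then every stochastically monotone (regular) continuous-time Markov chain on $S$ is realizably monotone.
   Context: A Markov chain (discrete or continuous time, time-homogeneous) on a poset $S$ with transition probabilities $P_t(x,y)$ is stochastically monotone if for every $w\le z$ there is a Markov chain $(X^1_t,X^2_t)$ on $S\times S$ started at $(w,z)$ whose components are Markov chains with transition probabilities $P_t$ and with $X^1_t\le X^2_t$ for all $t$. It is realizably monotone if there exists a Markov chain $(\xi_t)$ on $S^S$ with $\xi_0=\mathrm{Id}$, each $(\xi_t(z))$ a Markov chain with transition probabilities $P_t$, and $w\le z\Rightarrow\xi_t(w)\le\xi_t(z)$ for all $t$. A continuous-time chain is regular if it a.s. jumps finitely often in bounded time intervals. *)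

theory Defs
  imports Complex_Main
begin

definition stochastic :: "('s::finite \<Rightarrow> 's \<Rightarrow> real) \<Rightarrow> bool" where
  "stochastic P \<longleftrightarrow> (\<forall>x y. 0 \<le> P x y) \<and> (\<forall>x. (\<Sum>y\<in>UNIV. P x y) = 1)"

fun mpow :: "('s::finite \<Rightarrow> 's \<Rightarrow> real) \<Rightarrow> nat \<Rightarrow> 's \<Rightarrow> 's \<Rightarrow> real" where
  "mpow P 0 x y = (if x = y then 1 else 0)"
| "mpow P (Suc n) x y = (\<Sum>z\<in>UNIV. P x z * mpow P n z y)"

definition markov_semigroup :: "(real \<Rightarrow> 's::finite \<Rightarrow> 's \<Rightarrow> real) \<Rightarrow> bool" where
  "markov_semigroup P \<longleftrightarrow>
     (\<forall>t\<ge>0. stochastic (P t)) \<and>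
     (\<forall>x y. P 0 x y = (if x = y then 1 else 0)) \<and>
     (\<forall>s t x y. 0 \<le> s \<longrightarrow> 0 \<le> t \<longrightarrow> P (s + t) x y = (\<Sum>z\<in>UNIV. P s x z * P t z y)) \<and>
     (\<forall>x y. ((\<lambda>t. P t x y) \<longlongrightarrow> (if x = y then 1 else 0)) (at_right 0))"

text \<open>Probability that the chain with transition family P started in x visits
  successively the given states, each after the given time increment.\<close>
fun path_prob :: "('t \<Rightarrow> 's \<Rightarrow> 's \<Rightarrow> real) \<Rightarrow> 's \<Rightarrow> ('t \<times> 's) list \<Rightarrow> real" where
  "path_prob P x [] = 1"
| "path_prob P x ((d, y) # ps) = P d x y * path_prob P y ps"

text \<open>The process f(Y), where Y is the chain with transition family K started at u,
  is a Markov chain with transition family P started at x: all finite-dimensional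
  distributions agree (adm singles out admissible time increments).\<close>
definition image_markov ::
  "('t \<Rightarrow> 'u::finite \<Rightarrow> 'u \<Rightarrow> real) \<Rightarrow> 'u \<Rightarrow> ('u \<Rightarrow> 's) \<Rightarrow> ('t \<Rightarrow> bool)
    \<Rightarrow> ('t \<Rightarrow> 's \<Rightarrow> 's \<Rightarrow> real) \<Rightarrow> 's \<Rightarrow> bool" where
  "image_markov K u f adm P x \<longleftrightarrow> f u = x \<and>
     (\<forall>ds xs. length ds = length xs \<longrightarrow> (\<forall>d\<in>set ds. adm d) \<longrightarrow>
        (\<Sum>ys\<in>{ys. length ys = length xs \<and> map f ys = xs}. path_prob K u (zip ds ys))
          = path_prob P x (zip ds xs))"

text \<open>Almost surely, the chain with transition family K started at u satisfies Q
  at all admissible times.\<close>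
definition as_always ::
  "('t \<Rightarrow> 'u \<Rightarrow> 'u \<Rightarrow> real) \<Rightarrow> 'u \<Rightarrow> ('t \<Rightarrow> bool) \<Rightarrow> ('u \<Rightarrow> bool) \<Rightarrow> bool" where
  "as_always K u adm Q \<longleftrightarrow> (\<forall>d v. adm d \<longrightarrow> 0 < K d u v \<longrightarrow> Q v)"

definition dt_stoch_monotone :: "('a::{order,finite} \<Rightarrow> 'a \<Rightarrow> real) \<Rightarrow> bool" where
  "dt_stoch_monotone P \<longleftrightarrow> (\<forall>w z. w \<le> z \<longrightarrow>
     (\<exists>K :: ('a \<times> 'a) \<Rightarrow> ('a \<times> 'a) \<Rightarrow> real. stochastic K \<and>
        image_markov (mpow K) (w, z) fst (\<lambda>_. True) (mpow P) w \<and>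
        image_markov (mpow K) (w, z) snd (\<lambda>_. True) (mpow P) z \<and>
        as_always (mpow K) (w, z) (\<lambda>_. True) (\<lambda>(a, b). a \<le> b)))"

definition dt_realizably_monotone :: "('a::{order,finite} \<Rightarrow> 'a \<Rightarrow> real) \<Rightarrow> bool" where
  "dt_realizably_monotone P \<longleftrightarrow>
     (\<exists>K :: ('a \<Rightarrow> 'a) \<Rightarrow> ('a \<Rightarrow> 'a) \<Rightarrow> real. stochastic K \<and>
        (\<forall>z. image_markov (mpow K) id (\<lambda>\<xi>. \<xi> z) (\<lambda>_. True) (mpow P) z) \<and>
        as_always (mpow K) id (\<lambda>_. True) mono)"

definition ct_stoch_monotone :: "(real \<Rightarrow> 'a::{order,finite} \<Rightarrow> 'a \<Rightarrow> real) \<Rightarrow> bool" where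
  "ct_stoch_monotone P \<longleftrightarrow> (\<forall>w z. w \<le> z \<longrightarrow>
     (\<exists>K :: real \<Rightarrow> ('a \<times> 'a) \<Rightarrow> ('a \<times> 'a) \<Rightarrow> real. markov_semigroup K \<and>
        image_markov K (w, z) fst (\<lambda>t. 0 \<le> t) P w \<and>
        image_markov K (w, z) snd (\<lambda>t. 0 \<le> t) P z \<and>
        as_always K (w, z) (\<lambda>t. 0 \<le> t) (\<lambda>(a, b). a \<le> b)))"

definition ct_realizably_monotone :: "(real \<Rightarrow> 'a::{order,finite} \<Rightarrow> 'a \<Rightarrow> real) \<Rightarrow> bool" where
  "ct_realizably_monotone P \<longleftrightarrow>
     (\<exists>K :: real \<Rightarrow> ('a \<Rightarrow> 'a) \<Rightarrow> ('a \<Rightarrow> 'a) \<Rightarrow> real. markov_semigroup K \<and>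
        (\<forall>z. image_markov K id (\<lambda>\<xi>. \<xi> z) (\<lambda>t. 0 \<le> t) P z) \<and>
        as_always K id (\<lambda>t. 0 \<le> t) mono)"

end

theory Submission
  imports Defs "HOL-Analysis.Analysis" "HOL-Real_Asymp.Real_Asymp"
begin

text \<open>A regular chain on a finite state space has a generator \<open>Q = P'(0)\<close>, and stochastic
  monotonicity passes to generators: for \<open>w \<le> z\<close>, the jump rates out of \<open>(w, z)\<close> of a
  monotone coupling started there form a row supported on \<open>{a \<le> b}\<close> whose marginals are the
  rows \<open>Q w\<close> and \<open>Q z\<close>. Hence for small \<open>h > 0\<close> the Euler step \<open>M = I + h Q\<close> is a
  stochastic matrix with monotone one-step couplings, so it is stochastically monotone and, by
  hypothesis, realized by a random monotone map. Composing independent copies of that map at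
  the jump times of a Poisson process of rate \<open>1 / h\<close> realizes the semigroup
  \<open>exp (t (M - I) / h)\<close> by monotone maps; its generator is \<open>Q\<close>, so it is \<open>P\<close>.\<close>

abbreviation id_kernel :: "'s \<Rightarrow> 's \<Rightarrow> real" where
  "id_kernel x y \<equiv> if x = y then 1 else 0"

section \<open>Stochastic matrices and their powers\<close>

lemma stochastic_nonneg: "stochastic A \<Longrightarrow> 0 \<le> A x y"
  by (simp add: stochastic_def)

lemma stochastic_row_sum: "stochastic A \<Longrightarrow> (\<Sum>y\<in>UNIV. A x y) = 1"
  by (simp add: stochastic_def)

lemma stochastic_le_1: "stochastic A \<Longrightarrow> A x y \<le> 1"
  using member_le_sum[of y UNIV "A x"] by (simp add: stochastic_nonneg stochastic_row_sum)

lemma sum_mult_id_kernel_right: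
  fixes g :: "'s::finite \<Rightarrow> real"
  shows "(\<Sum>z\<in>UNIV. g z * id_kernel z y) = g y"
proof -
  have "(\<Sum>z\<in>UNIV. g z * id_kernel z y) = (\<Sum>z\<in>UNIV. if z = y then g z else 0)"
    by (rule sum.cong) auto
  then show ?thesis by simp
qed

lemma sum_mult_id_kernel_left:
  fixes g :: "'s::finite \<Rightarrow> real"
  shows "(\<Sum>z\<in>UNIV. id_kernel x z * g z) = g x"
proof -
  have "(\<Sum>z\<in>UNIV. id_kernel x z * g z) = (\<Sum>z\<in>UNIV. if x = z then g z else 0)"
    by (rule sum.cong) auto
  then show ?thesis by simp
qed

lemma sum_pos_imp_ex_pos:
  fixes g :: "'b \<Rightarrow> real"
  assumes "0 < sum g A"
  shows "\<exists>x\<in>A. 0 < g x"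
  using sum_nonpos[of A g] assms by (force simp: not_less)

lemma mpow_1 [simp]: "mpow A (Suc 0) x y = A x y"
  by (simp add: sum_mult_id_kernel_right)

lemma mpow_add: "mpow A (m + n) x y = (\<Sum>z\<in>UNIV. mpow A m x z * mpow A n z y)"
proof (induction m arbitrary: x)
  case 0
  show ?case by (simp add: sum_mult_id_kernel_left)
next
  case (Suc m)
  have "mpow A (Suc m + n) x y = (\<Sum>w\<in>UNIV. A x w * (\<Sum>z\<in>UNIV. mpow A m w z * mpow A n z y))"
    by (simp add: Suc)
  also have "\<dots> = (\<Sum>z\<in>UNIV. (\<Sum>w\<in>UNIV. A x w * mpow A m w z) * mpow A n z y)"
    by (simp add: sum_distrib_left sum_distrib_right mult.assoc) (rule sum.swap)
  finally show ?case by simp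
qed

lemma stochastic_mpow: "stochastic A \<Longrightarrow> stochastic (mpow A n)"
proof (induction n)
  case 0
  show ?case by (simp add: stochastic_def)
next
  case (Suc n)
  then have IH: "stochastic (mpow A n)" by simp
  show ?case
    unfolding stochastic_def
  proof (intro conjI allI)
    show "0 \<le> mpow A (Suc n) x y" for x y
      using Suc.prems IH by (simp add: sum_nonneg stochastic_nonneg)
    fix x
    have "(\<Sum>y\<in>UNIV. mpow A (Suc n) x y) = (\<Sum>z\<in>UNIV. A x z * (\<Sum>y\<in>UNIV. mpow A n z y))"
      by (simp add: sum_distrib_left) (rule sum.swap)
    also have "\<dots> = 1"
      using Suc.prems IH by (simp add: stochastic_row_sum)
    finally show "(\<Sum>y\<in>UNIV. mpow A (Suc n) x y) = 1" .
  qed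
qed

lemma mpow_nonneg: "stochastic A \<Longrightarrow> 0 \<le> mpow A n x y"
  by (rule stochastic_nonneg[OF stochastic_mpow])

lemma mpow_le_1: "stochastic A \<Longrightarrow> mpow A n x y \<le> 1"
  by (rule stochastic_le_1[OF stochastic_mpow])

lemma mpow_preserves_invariant:
  assumes step: "\<And>u v. Inv u \<Longrightarrow> 0 < A u v \<Longrightarrow> Inv v" and A: "stochastic A"
  shows "Inv u \<Longrightarrow> 0 < mpow A n u v \<Longrightarrow> Inv v"
proof (induction n arbitrary: u)
  case 0
  then show ?case by (simp split: if_splits)
next
  case (Suc n)
  then obtain \<zeta> where "0 < A u \<zeta> * mpow A n \<zeta> v"
    using sum_pos_imp_ex_pos[of "\<lambda>\<zeta>. A u \<zeta> * mpow A n \<zeta> v"] by auto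
  with stochastic_nonneg[OF A] mpow_nonneg[OF A] have "0 < A u \<zeta>" "0 < mpow A n \<zeta> v"
    by (auto simp: zero_less_mult_iff dest: leD)
  with Suc step show ?case by blast
qed

section \<open>Lumpable kernels\<close>

text \<open>Dynkin's criterion for the image under \<open>f\<close> of the chain with kernel \<open>K\<close> to be a Markov
  chain with kernel \<open>P\<close>.\<close>
definition lumpable :: "('u \<Rightarrow> 'u \<Rightarrow> real) \<Rightarrow> ('u \<Rightarrow> 's) \<Rightarrow> ('s \<Rightarrow> 's \<Rightarrow> real) \<Rightarrow> bool" where
  "lumpable K f P \<longleftrightarrow> (\<forall>\<eta> y. (\<Sum>\<xi>\<in>{\<xi>. f \<xi> = y}. K \<eta> \<xi>) = P (f \<eta>) y)"

lemma sum_over_fibres: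
  fixes f :: "'u::finite \<Rightarrow> 's::finite"
  shows "(\<Sum>w\<in>UNIV. \<Sum>\<zeta>\<in>{\<zeta>. f \<zeta> = w}. g \<zeta>) = (\<Sum>\<zeta>\<in>UNIV. g \<zeta>)"
  using sum.group[of UNIV UNIV f g] by (simp add: eq_commute)

lemma lumpable_mpow:
  fixes f :: "'u::finite \<Rightarrow> 's::finite"
  assumes "lumpable K f P"
  shows "lumpable (mpow K n) f (mpow P n)"
  unfolding lumpable_def
proof (induction n)
  case 0
  show ?case by (simp add: sum.delta)
next
  case (Suc n)
  show ?case
  proof (intro allI)
    fix \<eta> y
    have "(\<Sum>\<xi>\<in>{\<xi>. f \<xi> = y}. mpow K (Suc n) \<eta> \<xi>)
        = (\<Sum>\<zeta>\<in>UNIV. K \<eta> \<zeta> * (\<Sum>\<xi>\<in>{\<xi>. f \<xi> = y}. mpow K n \<zeta> \<xi>))"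
      by (simp add: sum_distrib_left sum.swap[of _ "{\<xi>. f \<xi> = y}" UNIV])
    also have "\<dots> = (\<Sum>\<zeta>\<in>UNIV. K \<eta> \<zeta> * mpow P n (f \<zeta>) y)"
      by (simp add: Suc)
    also have "\<dots> = (\<Sum>w\<in>UNIV. \<Sum>\<zeta>\<in>{\<zeta>. f \<zeta> = w}. K \<eta> \<zeta> * mpow P n (f \<zeta>) y)"
      by (rule sum_over_fibres[symmetric])
    also have "\<dots> = (\<Sum>w\<in>UNIV. (\<Sum>\<zeta>\<in>{\<zeta>. f \<zeta> = w}. K \<eta> \<zeta>) * mpow P n w y)"
      by (simp add: sum_distrib_right)
    also have "\<dots> = mpow P (Suc n) (f \<eta>) y"
      using assms by (simp add: lumpable_def)
    finally show "(\<Sum>\<xi>\<in>{\<xi>. f \<xi> = y}. mpow K (Suc n) \<eta> \<xi>) = mpow P (Suc n) (f \<eta>) y" .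
  qed
qed

lemma path_prob_lumpable:
  fixes f :: "'u::finite \<Rightarrow> 's"
  assumes lump: "\<And>d. adm d \<Longrightarrow> lumpable (K d) f (P d)"
  shows "length ds = length xs \<Longrightarrow> \<forall>d\<in>set ds. adm d \<Longrightarrow>
     (\<Sum>ys\<in>{ys. length ys = length xs \<and> map f ys = xs}. path_prob K u (zip ds ys))
       = path_prob P (f u) (zip ds xs)"
proof (induction xs arbitrary: ds u)
  case Nil
  then show ?case by simp
next
  case (Cons x xs)
  then obtain d ds' where ds: "ds = d # ds'" by (cases ds) auto
  have lifts: "{ys. length ys = length (x # xs) \<and> map f ys = x # xs}
     = (\<lambda>(y, ys). y # ys) ` ({y. f y = x} \<times> {ys. length ys = length xs \<and> map f ys = xs})"
    by (auto simp: length_Suc_conv image_iff)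
  have "(\<Sum>ys\<in>{ys. length ys = length (x # xs) \<and> map f ys = x # xs}. path_prob K u (zip ds ys))
     = (\<Sum>y\<in>{y. f y = x}. \<Sum>ys\<in>{ys. length ys = length xs \<and> map f ys = xs}.
           K d u y * path_prob K y (zip ds' ys))"
    unfolding lifts
    by (subst sum.reindex) (auto simp: inj_on_def sum.cartesian_product ds intro!: sum.cong)
  also have "\<dots> = (\<Sum>y\<in>{y. f y = x}. K d u y) * path_prob P x (zip ds' xs)"
    using Cons by (simp add: sum_distrib_left[symmetric] sum_distrib_right ds)
  also have "\<dots> = path_prob P (f u) (zip ds (x # xs))"
    using Cons.prems lump[of d] by (simp add: lumpable_def ds)
  finally show ?case .
qed

lemma image_markov_lumpable:
  fixes f :: "'u::finite \<Rightarrow> 's"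
  assumes "\<And>d. adm d \<Longrightarrow> lumpable (K d) f (P d)"
  shows "image_markov K u f adm P (f u)"
  unfolding image_markov_def by (intro conjI refl allI impI path_prob_lumpable[OF assms])

lemma image_markov_fibre_sum:
  fixes f :: "'u::finite \<Rightarrow> 's"
  assumes "image_markov K u f adm P x" "adm d"
  shows "(\<Sum>\<xi>\<in>{\<xi>. f \<xi> = y}. K d u \<xi>) = P d x y"
proof -
  have "(\<Sum>ys\<in>{ys. length ys = length [y] \<and> map f ys = [y]}. path_prob K u (zip [d] ys))
      = path_prob P x (zip [d] [y])"
    using assms(1)[unfolded image_markov_def, THEN conjunct2, rule_format, of "[d]" "[y]"] assms(2)
    by simp
  moreover have "{ys. length ys = length [y] \<and> map f ys = [y]} = (\<lambda>\<xi>. [\<xi>]) ` {\<xi>. f \<xi> = y}"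
    by (auto simp: length_Suc_conv)
  ultimately show ?thesis
    by (simp add: sum.reindex inj_on_def)
qed

section \<open>Markov semigroups and their generators\<close>

definition has_generator :: "(real \<Rightarrow> 's \<Rightarrow> 's \<Rightarrow> real) \<Rightarrow> ('s \<Rightarrow> 's \<Rightarrow> real) \<Rightarrow> bool" where
  "has_generator P Q \<longleftrightarrow> (\<forall>x y. ((\<lambda>t. (P t x y - id_kernel x y) / t) \<longlongrightarrow> Q x y) (at_right 0))"

lemma filterlim_divide_at_right_0:
  assumes "0 < h"
  shows "filterlim (\<lambda>t. t / h) (at_right 0) (at_right (0::real))"
  unfolding filterlim_at
proof
  show "\<forall>\<^sub>F t in at_right 0. t / h \<in> {0<..} \<and> t / h \<noteq> 0"
    using eventually_at_right_less[of "0::real"] by eventually_elim (use assms in auto)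
  have "((\<lambda>t. t / h) \<longlongrightarrow> 0 / h) (at_right 0)"
    using assms by (intro tendsto_intros) auto
  then show "((\<lambda>t. t / h) \<longlongrightarrow> 0) (at_right 0)"
    by simp
qed

lemma filterlim_divide_real_at_right_0:
  assumes "0 < t"
  shows "filterlim (\<lambda>n. t / real n) (at_right 0) sequentially"
  unfolding filterlim_at
proof
  show "\<forall>\<^sub>F n in sequentially. t / real n \<in> {0<..} \<and> t / real n \<noteq> 0"
    using eventually_gt_at_top[of "0::nat"] by eventually_elim (use assms in auto)
  show "((\<lambda>n. t / real n) \<longlongrightarrow> 0) sequentially"
    by (rule lim_const_over_n)
qed

lemma tendsto_integral_average_right:
  fixes f :: "real \<Rightarrow> real"
  assumes f: "continuous_on {0..} f" and a: "0 \<le> a"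
  shows "((\<lambda>h. integral {a..a+h} f / h) \<longlongrightarrow> f a) (at_right 0)"
proof -
  have "continuous_on {a..a+1} f"
    by (rule continuous_on_subset[OF f]) (use a in auto)
  then have "((\<lambda>u. integral {a..u} f) has_vector_derivative f a) (at a within {a..a+1})"
    by (rule integral_has_vector_derivative) auto
  then have "((\<lambda>u. (integral {a..u} f - integral {a..a} f) / (u - a)) \<longlongrightarrow> f a) (at_right a)"
    by (simp add: has_real_derivative_iff_has_vector_derivative[symmetric] has_field_derivative_iff
        at_within_Icc_at_right)
  then have "((\<lambda>h. (integral {a..h + a} f - integral {a..a} f) / (h + a - a)) \<longlongrightarrow> f a) (at_right 0)"
    by (simp add: filterlim_at_right_to_0[of _ _ a])
  then show ?thesis
    by (simp add: add.commute)
qed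

text \<open>Strict diagonal dominance: at a coordinate \<open>x\<close> where \<open>\<bar>v x\<bar>\<close> is maximal,
  \<open>A v = 0\<close> forces \<open>\<bar>v x\<bar> \<le> \<bar>v x\<bar> / 2\<close>, so the kernel of \<open>A\<close> is trivial.\<close>
lemma exists_right_inverse_near_id:
  fixes A :: "'s::finite \<Rightarrow> 's \<Rightarrow> real"
  assumes near: "\<And>x y. \<bar>A x y - id_kernel x y\<bar> \<le> 1 / (2 * real CARD('s))"
  shows "\<exists>V. \<forall>x y. (\<Sum>z\<in>UNIV. A x z * V z y) = id_kernel x y"
proof -
  define M :: "real^'s^'s" where "M = (\<chi> i j. A i j)"
  have "v = 0" if Mv: "M *v v = 0" for v :: "real^'s"
  proof -
    have "Max (range (\<lambda>y. \<bar>v $ y\<bar>)) \<in> range (\<lambda>y. \<bar>v $ y\<bar>)"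
      by (rule Max_in) auto
    then obtain x0 where x0_max: "\<bar>v $ x0\<bar> = Max (range (\<lambda>y. \<bar>v $ y\<bar>))"
      by (metis rangeE)
    have x0: "\<bar>v $ y\<bar> \<le> \<bar>v $ x0\<bar>" for y
      unfolding x0_max by (rule Max_ge) auto
    have "v $ x0 = (\<Sum>y\<in>UNIV. id_kernel x0 y * v $ y) - (\<Sum>y\<in>UNIV. A x0 y * v $ y)"
      using Mv by (simp add: sum_mult_id_kernel_left M_def matrix_vector_mult_def vec_eq_iff)
    also have "\<dots> = - (\<Sum>y\<in>UNIV. (A x0 y - id_kernel x0 y) * v $ y)"
      by (simp add: left_diff_distrib sum_subtractf)
    finally have "\<bar>v $ x0\<bar> \<le> (\<Sum>y\<in>UNIV. \<bar>A x0 y - id_kernel x0 y\<bar> * \<bar>v $ y\<bar>)"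
      by (simp add: sum_abs[THEN order_trans] abs_mult)
    also have "\<dots> \<le> (\<Sum>y\<in>(UNIV::'s set). 1 / (2 * real CARD('s)) * \<bar>v $ x0\<bar>)"
      by (intro sum_mono mult_mono near x0) auto
    also have "\<dots> = \<bar>v $ x0\<bar> / 2"
      by simp
    finally have "\<bar>v $ x0\<bar> \<le> 0"
      by simp
    then show "v = 0"
      using x0 by (simp add: vec_eq_iff)
  qed
  then obtain B where "B ** M = mat 1"
    using matrix_left_invertible_ker[of M] by blast
  then have "M ** B = mat 1"
    by (simp add: matrix_left_right_inverse)
  then have "(\<Sum>z\<in>UNIV. A x z * B $ z $ y) = id_kernel x y" for x y
    by (auto simp: M_def matrix_matrix_mult_def mat_def vec_eq_iff dest!: spec[of _ x] spec[of _ y])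
  then show ?thesis
    by (intro exI[of _ "\<lambda>z y. B $ z $ y"] allI) simp
qed

context
  fixes P :: "real \<Rightarrow> 's::finite \<Rightarrow> 's \<Rightarrow> real"
  assumes P: "markov_semigroup P"
begin

lemma markov_semigroup_stochastic: "0 \<le> t \<Longrightarrow> stochastic (P t)"
  using P by (simp add: markov_semigroup_def)

lemma markov_semigroup_0: "P 0 x y = id_kernel x y"
  using P by (simp add: markov_semigroup_def)

lemma markov_semigroup_add: "0 \<le> s \<Longrightarrow> 0 \<le> t \<Longrightarrow> P (s + t) x y = (\<Sum>z\<in>UNIV. P s x z * P t z y)"
  using P by (simp add: markov_semigroup_def)

lemma markov_semigroup_tendsto_id: "((\<lambda>t. P t x y) \<longlongrightarrow> id_kernel x y) (at_right 0)"
  using P by (simp add: markov_semigroup_def)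

lemma markov_semigroup_nonneg: "0 \<le> t \<Longrightarrow> 0 \<le> P t x y"
  using markov_semigroup_stochastic stochastic_nonneg by blast

lemma markov_semigroup_le_1: "0 \<le> t \<Longrightarrow> P t x y \<le> 1"
  using markov_semigroup_stochastic stochastic_le_1 by blast

lemma markov_semigroup_tendsto_right:
  assumes t: "0 \<le> t"
  shows "((\<lambda>s. P s x y) \<longlongrightarrow> P t x y) (at_right t)"
proof -
  have "((\<lambda>h. \<Sum>z\<in>UNIV. P t x z * P h z y) \<longlongrightarrow> (\<Sum>z\<in>UNIV. P t x z * id_kernel z y)) (at_right 0)"
    by (intro tendsto_intros markov_semigroup_tendsto_id)
  then have "((\<lambda>h. \<Sum>z\<in>UNIV. P t x z * P h z y) \<longlongrightarrow> P t x y) (at_right 0)"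
    by (simp add: sum_mult_id_kernel_right)
  moreover have "\<forall>\<^sub>F h in at_right 0. (\<Sum>z\<in>UNIV. P t x z * P h z y) = P (h + t) x y"
    using eventually_at_right_less[of "0::real"]
    by eventually_elim (subst add.commute, use t in \<open>simp add: markov_semigroup_add\<close>)
  ultimately have "((\<lambda>h. P (h + t) x y) \<longlongrightarrow> P t x y) (at_right 0)"
    by (rule Lim_transform_eventually)
  then show ?thesis
    by (simp add: filterlim_at_right_to_0[of _ _ t])
qed

lemma markov_semigroup_tendsto_left:
  assumes t: "0 < t"
  shows "((\<lambda>s. P s x y) \<longlongrightarrow> P t x y) (at_left t)"
proof -
  define g where "g h = (\<Sum>z\<in>UNIV. \<bar>id_kernel z y - P h z y\<bar>)" for h
  have "(g \<longlongrightarrow> (\<Sum>z\<in>UNIV. \<bar>id_kernel z y - id_kernel z y\<bar>)) (at_right 0)"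
    unfolding g_def by (intro tendsto_intros markov_semigroup_tendsto_id)
  then have g: "(g \<longlongrightarrow> 0) (at_right 0)"
    by simp
  have "norm (P (t - h) x y - P t x y) \<le> g h" if h: "0 < h" "h < t" for h
  proof -
    have "P t x y = (\<Sum>z\<in>UNIV. P (t - h) x z * P h z y)"
      using h markov_semigroup_add[of "t - h" h] by simp
    then have "P (t - h) x y - P t x y = (\<Sum>z\<in>UNIV. P (t - h) x z * (id_kernel z y - P h z y))"
      by (simp add: sum_mult_id_kernel_right right_diff_distrib sum_subtractf)
    then have "norm (P (t - h) x y - P t x y) \<le> (\<Sum>z\<in>UNIV. P (t - h) x z * \<bar>id_kernel z y - P h z y\<bar>)"
      using h markov_semigroup_nonneg[of "t - h"] by (simp add: sum_abs[THEN order_trans] abs_mult)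
    also have "\<dots> \<le> g h"
      unfolding g_def
      by (intro sum_mono mult_left_le_one_le) (use h markov_semigroup_nonneg markov_semigroup_le_1 in auto)
    finally show ?thesis .
  qed
  then have "\<forall>\<^sub>F h in at_right 0. norm (P (t - h) x y - P t x y) \<le> g h"
    unfolding eventually_at_right_field using t by (intro exI[of _ t]) auto
  then have "((\<lambda>h. P (t - h) x y - P t x y) \<longlongrightarrow> 0) (at_right 0)"
    by (rule Lim_null_comparison[OF _ g])
  then have "((\<lambda>h. P (t - h) x y - P t x y + P t x y) \<longlongrightarrow> 0 + P t x y) (at_right 0)"
    by (intro tendsto_intros)
  then have "((\<lambda>h. P (- (h + - t)) x y) \<longlongrightarrow> P t x y) (at_right 0)"
    by simp
  then show ?thesis
    by (simp add: filterlim_at_left_to_right filterlim_at_right_to_0[of _ _ "-t"])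
qed

lemma markov_semigroup_continuous_on: "continuous_on {0..} (\<lambda>s. P s x y)"
  unfolding continuous_on_eq_continuous_within continuous_within
proof
  fix t :: real
  assume "t \<in> {0..}"
  then consider "t = 0" | "0 < t"
    by fastforce
  then show "((\<lambda>s. P s x y) \<longlongrightarrow> P t x y) (at t within {0..})"
  proof cases
    case 1
    then show ?thesis
      using markov_semigroup_tendsto_right[of 0] by (simp add: at_within_Ici_at_right)
  next
    case 2
    then have "((\<lambda>s. P s x y) \<longlongrightarrow> P t x y) (at t)"
      using markov_semigroup_tendsto_left markov_semigroup_tendsto_right by (simp add: filterlim_at_split)
    then show ?thesis
      by (rule tendsto_mono[OF at_le, rotated]) simp
  qed
qed

lemma markov_semigroup_integrable: "0 \<le> a \<Longrightarrow> (\<lambda>s. P s x y) integrable_on {a..b}"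
  by (rule integrable_continuous_real, rule continuous_on_subset[OF markov_semigroup_continuous_on]) auto

lemma markov_semigroup_integral_shift:
  assumes h: "0 \<le> h" and e: "0 \<le> e"
  shows "(\<Sum>z\<in>UNIV. P h x z * integral {0..e} (\<lambda>s. P s z y)) = integral {h..h+e} (\<lambda>s. P s x y)"
proof -
  have "(\<Sum>z\<in>UNIV. P h x z * integral {0..e} (\<lambda>s. P s z y))
      = integral {0..e} (\<lambda>s. \<Sum>z\<in>UNIV. P h x z * P s z y)"
    by (subst Henstock_Kurzweil_Integration.integral_sum)
       (auto intro!: integrable_on_mult_right markov_semigroup_integrable)
  also have "\<dots> = integral {0..e} ((\<lambda>s. P s x y) \<circ> ((+) h))"
    by (rule integral_cong) (use h in \<open>simp add: markov_semigroup_add\<close>)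
  also have "\<dots> = integral {h..h+e} (\<lambda>s. P s x y)"
    using integral_shift_Icc_real[of 0 e "\<lambda>s. P s x y" h] by (simp add: add.commute)
  finally show ?thesis .
qed

lemma markov_semigroup_integral_near_id:
  assumes "0 < c"
  shows "\<exists>e>0. \<forall>x y. \<bar>integral {0..e} (\<lambda>s. P s x y) / e - id_kernel x y\<bar> < c"
proof -
  have lim: "((\<lambda>h. integral {0..0+h} (\<lambda>s. P s x y) / h) \<longlongrightarrow> id_kernel x y) (at_right 0)" for x y
    using tendsto_integral_average_right[OF markov_semigroup_continuous_on, of 0] markov_semigroup_0
    by simp
  have "\<forall>\<^sub>F h in at_right 0. \<bar>integral {0..h} (\<lambda>s. P s x y) / h - id_kernel x y\<bar> < c" for x y
    using tendstoD[OF lim[of x y] assms] by (simp add: dist_real_def)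
  then have "\<forall>\<^sub>F h in at_right 0. 0 < h \<and> (\<forall>x y. \<bar>integral {0..h} (\<lambda>s. P s x y) / h - id_kernel x y\<bar> < c)"
    by (intro eventually_conj eventually_at_right_less eventually_all_finite)
  then show ?thesis
    using eventually_happens'[OF trivial_limit_at_right_real] by blast
qed

text \<open>With \<open>W\<close> the integral of \<open>P\<close> over \<open>[0, e]\<close>, the semigroup property gives
  \<open>(P h - I) W = \<integral>[e, e + h] P - \<integral>[0, h] P\<close>.\<close>
lemma markov_semigroup_difference_quotient_integral:
  assumes e: "0 < e"
  shows "((\<lambda>h. \<Sum>z\<in>UNIV. (P h x z - id_kernel x z) / h * integral {0..e} (\<lambda>s. P s z w))
           \<longlongrightarrow> P e x w - id_kernel x w) (at_right 0)"
proof -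
  have "((\<lambda>h. integral {e..e+h} (\<lambda>s. P s x w) / h - integral {0..0+h} (\<lambda>s. P s x w) / h)
          \<longlongrightarrow> P e x w - P 0 x w) (at_right 0)"
    by (intro tendsto_diff tendsto_integral_average_right[OF markov_semigroup_continuous_on]) (use e in auto)
  moreover have "\<forall>\<^sub>F h in at_right 0.
      integral {e..e+h} (\<lambda>s. P s x w) / h - integral {0..0+h} (\<lambda>s. P s x w) / h
        = (\<Sum>z\<in>UNIV. (P h x z - id_kernel x z) / h * integral {0..e} (\<lambda>s. P s z w))"
    using eventually_at_right_less[of "0::real"]
  proof eventually_elim
    case (elim h)
    have "integral {0..h} (\<lambda>s. P s x w) + integral {h..h+e} (\<lambda>s. P s x w)
        = integral {0..e} (\<lambda>s. P s x w) + integral {e..e+h} (\<lambda>s. P s x w)"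
      using Henstock_Kurzweil_Integration.integral_combine[of 0 h "h+e" "\<lambda>s. P s x w"]
        Henstock_Kurzweil_Integration.integral_combine[of 0 e "h+e" "\<lambda>s. P s x w"]
        elim e markov_semigroup_integrable[of 0 x w "h+e"]
      by (simp add: add.commute)
    then have "integral {e..e+h} (\<lambda>s. P s x w) - integral {0..h} (\<lambda>s. P s x w)
        = (\<Sum>z\<in>UNIV. P h x z * integral {0..e} (\<lambda>s. P s z w))
            - (\<Sum>z\<in>UNIV. id_kernel x z * integral {0..e} (\<lambda>s. P s z w))"
      using elim e by (simp add: markov_semigroup_integral_shift sum_mult_id_kernel_left)
    also have "\<dots> = (\<Sum>z\<in>UNIV. (P h x z - id_kernel x z) * integral {0..e} (\<lambda>s. P s z w))"
      by (simp add: sum_subtractf[symmetric] left_diff_distrib)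
    finally show ?case
      by (simp add: diff_divide_distrib[symmetric] sum_divide_distrib)
  qed
  ultimately show ?thesis
    by (simp add: markov_semigroup_0 Lim_transform_eventually)
qed

text \<open>\<open>Q = (P e - I) W\<^sup>-\<^sup>1\<close>, where \<open>W / e\<close> is close to \<open>I\<close> for small \<open>e\<close>.\<close>
lemma markov_semigroup_has_generator: "\<exists>Q. has_generator P Q"
proof -
  obtain e where e: "0 < e"
    and near: "\<And>x y. \<bar>integral {0..e} (\<lambda>s. P s x y) / e - id_kernel x y\<bar> < 1 / (2 * real CARD('s))"
    using markov_semigroup_integral_near_id[of "1 / (2 * real CARD('s))"] by auto
  define W where "W x y = integral {0..e} (\<lambda>s. P s x y)" for x y
  obtain V where V: "\<And>x y. (\<Sum>z\<in>UNIV. W x z / e * V z y) = id_kernel x y"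
    using exists_right_inverse_near_id[of "\<lambda>x y. W x y / e"] near less_imp_le unfolding W_def
    by blast
  define U where "U z y = V z y / e" for z y
  have U: "(\<Sum>z\<in>UNIV. W x z * U z y) = id_kernel x y" for x y
    using V[of x y] by (simp add: U_def)
  have eq: "(\<Sum>w\<in>UNIV. (\<Sum>z\<in>UNIV. (P h x z - id_kernel x z) / h * W z w) * U w y)
      = (P h x y - id_kernel x y) / h" for h x y
  proof -
    have "(\<Sum>w\<in>UNIV. (\<Sum>z\<in>UNIV. (P h x z - id_kernel x z) / h * W z w) * U w y)
        = (\<Sum>z\<in>UNIV. (P h x z - id_kernel x z) / h * (\<Sum>w\<in>UNIV. W z w * U w y))"
      by (simp add: sum_distrib_left sum_distrib_right mult.assoc) (rule sum.swap)
    also have "\<dots> = (\<Sum>z\<in>UNIV. (P h x z - id_kernel x z) / h * id_kernel z y)"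
      by (simp only: U)
    finally show ?thesis
      by (simp only: sum_mult_id_kernel_right)
  qed
  have lim: "((\<lambda>h. \<Sum>w\<in>UNIV. (\<Sum>z\<in>UNIV. (P h x z - id_kernel x z) / h * W z w) * U w y)
      \<longlongrightarrow> (\<Sum>w\<in>UNIV. (P e x w - id_kernel x w) * U w y)) (at_right 0)" for x y
    unfolding W_def by (intro tendsto_sum tendsto_mult_right markov_semigroup_difference_quotient_integral e)
  show ?thesis
    unfolding has_generator_def
  proof (intro exI allI)
    show "((\<lambda>t. (P t x y - id_kernel x y) / t) \<longlongrightarrow> (\<Sum>w\<in>UNIV. (P e x w - id_kernel x w) * U w y))
        (at_right 0)" for x y
      using lim[of x y] unfolding eq .
  qed
qed

lemma has_generator_off_diagonal_nonneg:
  assumes Q: "has_generator P Q" and xy: "x \<noteq> y"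
  shows "0 \<le> Q x y"
proof (rule tendsto_lowerbound)
  show "((\<lambda>t. (P t x y - id_kernel x y) / t) \<longlongrightarrow> Q x y) (at_right 0)"
    using Q by (simp add: has_generator_def)
  show "\<forall>\<^sub>F t in at_right 0. 0 \<le> (P t x y - id_kernel x y) / t"
    using eventually_at_right_less[of "0::real"] by eventually_elim (use xy markov_semigroup_nonneg in simp)
qed simp

lemma has_generator_row_sum:
  assumes Q: "has_generator P Q"
  shows "(\<Sum>y\<in>UNIV. Q x y) = 0"
proof (rule tendsto_unique[OF trivial_limit_at_right_real])
  show "((\<lambda>t. \<Sum>y\<in>UNIV. (P t x y - id_kernel x y) / t) \<longlongrightarrow> (\<Sum>y\<in>UNIV. Q x y)) (at_right 0)"
    using Q by (intro tendsto_sum) (simp add: has_generator_def)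
  have "(\<Sum>y\<in>UNIV. (P t x y - id_kernel x y) / t) = 0" if "0 < t" for t
    using stochastic_row_sum[OF markov_semigroup_stochastic, of t x] that
    by (simp add: sum_divide_distrib[symmetric] sum_subtractf)
  then show "((\<lambda>t. \<Sum>y\<in>UNIV. (P t x y - id_kernel x y) / t) \<longlongrightarrow> 0) (at_right 0)"
    by (intro tendsto_eventually) (auto intro: eventually_mono[OF eventually_at_right_less])
qed

end

lemma row_norm_stochastic_mult_le:
  fixes S A :: "'s::finite \<Rightarrow> 's \<Rightarrow> real"
  assumes S: "stochastic S" and A: "\<And>z. (\<Sum>y\<in>UNIV. \<bar>A z y\<bar>) \<le> c"
  shows "(\<Sum>y\<in>UNIV. \<bar>\<Sum>z\<in>UNIV. S x z * A z y\<bar>) \<le> c"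
proof -
  have "(\<Sum>y\<in>UNIV. \<bar>\<Sum>z\<in>UNIV. S x z * A z y\<bar>) \<le> (\<Sum>y\<in>UNIV. \<Sum>z\<in>UNIV. S x z * \<bar>A z y\<bar>)"
    by (intro sum_mono order_trans[OF sum_abs]) (simp add: abs_mult stochastic_nonneg[OF S])
  also have "\<dots> = (\<Sum>z\<in>UNIV. S x z * (\<Sum>y\<in>UNIV. \<bar>A z y\<bar>))"
    by (simp add: sum_distrib_left) (rule sum.swap)
  also have "\<dots> \<le> (\<Sum>z\<in>UNIV. S x z * c)"
    by (intro sum_mono mult_left_mono A stochastic_nonneg[OF S])
  also have "\<dots> = c"
    by (simp add: sum_distrib_right[symmetric] stochastic_row_sum[OF S])
  finally show ?thesis .
qed

lemma row_norm_mult_stochastic_le: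
  fixes S A :: "'s::finite \<Rightarrow> 's \<Rightarrow> real"
  assumes S: "stochastic S" and A: "(\<Sum>z\<in>UNIV. \<bar>A x z\<bar>) \<le> c"
  shows "(\<Sum>y\<in>UNIV. \<bar>\<Sum>z\<in>UNIV. A x z * S z y\<bar>) \<le> c"
proof -
  have "(\<Sum>y\<in>UNIV. \<bar>\<Sum>z\<in>UNIV. A x z * S z y\<bar>) \<le> (\<Sum>y\<in>UNIV. \<Sum>z\<in>UNIV. \<bar>A x z\<bar> * S z y)"
    by (intro sum_mono order_trans[OF sum_abs]) (simp add: abs_mult stochastic_nonneg[OF S])
  also have "\<dots> = (\<Sum>z\<in>UNIV. \<bar>A x z\<bar> * (\<Sum>y\<in>UNIV. S z y))"
    by (simp add: sum_distrib_left) (rule sum.swap)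
  also have "\<dots> = (\<Sum>z\<in>UNIV. \<bar>A x z\<bar>)"
    by (simp add: stochastic_row_sum[OF S])
  finally show ?thesis
    using A by linarith
qed

text \<open>Estimate the rows of
  \<open>P (n \<tau>) - R (n \<tau>) = P \<tau> (P ((n - 1) \<tau>) - R ((n - 1) \<tau>)) + (P \<tau> - R \<tau>) R ((n - 1) \<tau>)\<close>.\<close>
lemma markov_semigroups_row_distance_mult:
  fixes P R :: "real \<Rightarrow> 's::finite \<Rightarrow> 's \<Rightarrow> real"
  assumes P: "markov_semigroup P" and R: "markov_semigroup R" and \<tau>: "0 \<le> \<tau>"
    and c: "\<And>x. (\<Sum>y\<in>UNIV. \<bar>P \<tau> x y - R \<tau> x y\<bar>) \<le> c"
  shows "(\<Sum>y\<in>UNIV. \<bar>P (real n * \<tau>) x y - R (real n * \<tau>) x y\<bar>) \<le> real n * c"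
proof (induction n arbitrary: x)
  case 0
  then show ?case
    using markov_semigroup_0[OF P] markov_semigroup_0[OF R] by simp
next
  case (Suc n)
  have n\<tau>: "0 \<le> real n * \<tau>"
    using \<tau> by simp
  define a where "a y = (\<Sum>z\<in>UNIV. P \<tau> x z * (P (real n * \<tau>) z y - R (real n * \<tau>) z y))" for y
  define b where "b y = (\<Sum>z\<in>UNIV. (P \<tau> x z - R \<tau> x z) * R (real n * \<tau>) z y)" for y
  have "P (real (Suc n) * \<tau>) x y - R (real (Suc n) * \<tau>) x y = a y + b y" for y
  proof -
    have "real (Suc n) * \<tau> = \<tau> + real n * \<tau>"
      by (simp add: algebra_simps)
    then have "P (real (Suc n) * \<tau>) x y - R (real (Suc n) * \<tau>) x y
        = (\<Sum>z\<in>UNIV. P \<tau> x z * P (real n * \<tau>) z y) - (\<Sum>z\<in>UNIV. R \<tau> x z * R (real n * \<tau>) z y)"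
      using markov_semigroup_add[OF P \<tau> n\<tau>] markov_semigroup_add[OF R \<tau> n\<tau>] by simp
    then show ?thesis
      unfolding a_def b_def by (simp add: algebra_simps sum.distrib[symmetric] sum_subtractf[symmetric])
  qed
  then have "(\<Sum>y\<in>UNIV. \<bar>P (real (Suc n) * \<tau>) x y - R (real (Suc n) * \<tau>) x y\<bar>)
      \<le> (\<Sum>y\<in>UNIV. \<bar>a y\<bar>) + (\<Sum>y\<in>UNIV. \<bar>b y\<bar>)"
    by (simp add: sum.distrib[symmetric] sum_mono abs_triangle_ineq)
  also have "\<dots> \<le> real n * c + c"
    unfolding a_def b_def
    by (intro add_mono row_norm_stochastic_mult_le[OF markov_semigroup_stochastic[OF P \<tau>]]
        row_norm_mult_stochastic_le[OF markov_semigroup_stochastic[OF R n\<tau>]] Suc.IH c)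
  finally show ?case
    by (simp add: algebra_simps)
qed

lemma markov_semigroups_row_distance_le:
  fixes P R :: "real \<Rightarrow> 's::finite \<Rightarrow> 's \<Rightarrow> real" and n :: nat
  assumes P: "markov_semigroup P" and R: "markov_semigroup R" and t: "0 < t" and n: "0 < n"
  shows "(\<Sum>y\<in>UNIV. \<bar>P t x y - R t x y\<bar>)
    \<le> t * (\<Sum>x\<in>UNIV. \<Sum>y\<in>UNIV.
          \<bar>(P (t / n) x y - id_kernel x y) / (t / n) - (R (t / n) x y - id_kernel x y) / (t / n)\<bar>)"
proof -
  define h where "h = t / real n"
  have h: "0 < h" "t = real n * h"
    unfolding h_def using n t by simp_all
  define c where "c = (\<Sum>x\<in>UNIV. \<Sum>y\<in>UNIV. \<bar>P h x y - R h x y\<bar>)"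
  have "(\<Sum>y\<in>UNIV. \<bar>P h x y - R h x y\<bar>) \<le> c" for x
    unfolding c_def by (rule member_le_sum[of x UNIV "\<lambda>x. \<Sum>y\<in>UNIV. \<bar>P h x y - R h x y\<bar>"])
      (auto intro: sum_nonneg)
  then have "(\<Sum>y\<in>UNIV. \<bar>P t x y - R t x y\<bar>) \<le> real n * c"
    unfolding h(2) by (rule markov_semigroups_row_distance_mult[OF P R less_imp_le[OF h(1)]])
  also have "(\<Sum>x\<in>UNIV. \<Sum>y\<in>UNIV. \<bar>(P h x y - id_kernel x y) / h - (R h x y - id_kernel x y) / h\<bar>) = c / h"
    unfolding c_def sum_divide_distrib
    by (intro sum.cong refl) (use h in \<open>simp add: diff_divide_distrib[symmetric] abs_divide\<close>)
  then have "real n * c = t * (\<Sum>x\<in>UNIV. \<Sum>y\<in>UNIV. \<bar>(P h x y - id_kernel x y) / h - (R h x y - id_kernel x y) / h\<bar>)"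
    using h by simp
  finally show ?thesis
    unfolding h_def .
qed

text \<open>The distance of \<open>P t\<close> and \<open>R t\<close> is at most \<open>n\<close> times their
  distance at time \<open>t / n\<close>, which is \<open>o(1 / n)\<close> since the generators agree.\<close>
lemma markov_semigroup_generator_unique:
  fixes P R :: "real \<Rightarrow> 's::finite \<Rightarrow> 's \<Rightarrow> real"
  assumes P: "markov_semigroup P" and R: "markov_semigroup R"
    and PQ: "has_generator P Q" and RQ: "has_generator R Q" and t: "0 \<le> t"
  shows "P t x y = R t x y"
proof (cases "t = 0")
  case True
  then show ?thesis
    using markov_semigroup_0[OF P] markov_semigroup_0[OF R] by simp
next
  case False
  with t have t: "0 < t"
    by simp
  define g where "g h = (\<Sum>x\<in>UNIV. \<Sum>y\<in>UNIV. \<bar>(P h x y - id_kernel x y) / h - (R h x y - id_kernel x y) / h\<bar>)"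
    for h
  have "(g \<longlongrightarrow> (\<Sum>x\<in>UNIV. \<Sum>y\<in>UNIV. \<bar>Q x y - Q x y\<bar>)) (at_right 0)"
    using PQ RQ unfolding g_def has_generator_def by (intro tendsto_intros) auto
  then have "((\<lambda>n. t * g (t / real n)) \<longlongrightarrow> t * 0) sequentially"
    by (intro tendsto_mult tendsto_const filterlim_compose[OF _ filterlim_divide_real_at_right_0[OF t]]) simp
  then have "(\<Sum>y\<in>UNIV. \<bar>P t x y - R t x y\<bar>) \<le> t * 0"
  proof (rule tendsto_lowerbound)
    show "\<forall>\<^sub>F n in sequentially. (\<Sum>y\<in>UNIV. \<bar>P t x y - R t x y\<bar>) \<le> t * g (t / real n)"
      using eventually_gt_at_top[of "0::nat"]
      by eventually_elim (unfold g_def, rule markov_semigroups_row_distance_le[OF P R t])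
  qed simp
  moreover have "\<bar>P t x y - R t x y\<bar> \<le> (\<Sum>y\<in>UNIV. \<bar>P t x y - R t x y\<bar>)"
    by (rule member_le_sum) auto
  ultimately show ?thesis
    by simp
qed

lemma has_generator_fibre_sum:
  fixes f :: "'u::finite \<Rightarrow> 's"
  assumes K: "has_generator K G" and P: "has_generator P Q"
    and image: "image_markov K u f (\<lambda>t. 0 \<le> t) P x"
  shows "(\<Sum>v\<in>{v. f v = c}. G u v) = Q x c"
proof (rule tendsto_unique[OF trivial_limit_at_right_real])
  show "((\<lambda>t. \<Sum>v\<in>{v. f v = c}. (K t u v - id_kernel u v) / t) \<longlongrightarrow> (\<Sum>v\<in>{v. f v = c}. G u v)) (at_right 0)"
    using K by (intro tendsto_sum) (simp add: has_generator_def)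
  have "f u = x"
    using image by (simp add: image_markov_def)
  then have "(P t x c - id_kernel x c) / t = (\<Sum>v\<in>{v. f v = c}. (K t u v - id_kernel u v) / t)" if "0 < t" for t
    using image_markov_fibre_sum[OF image, of t c] that
    by (simp add: sum_divide_distrib[symmetric] sum_subtractf)
  then have "\<forall>\<^sub>F t in at_right 0. (P t x c - id_kernel x c) / t = (\<Sum>v\<in>{v. f v = c}. (K t u v - id_kernel u v) / t)"
    by (intro eventually_mono[OF eventually_at_right_less])
  moreover have "((\<lambda>t. (P t x c - id_kernel x c) / t) \<longlongrightarrow> Q x c) (at_right 0)"
    using P by (simp add: has_generator_def)
  ultimately show "((\<lambda>t. \<Sum>v\<in>{v. f v = c}. (K t u v - id_kernel u v) / t) \<longlongrightarrow> Q x c) (at_right 0)"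
    by (rule Lim_transform_eventually[rotated])
qed

lemma has_generator_eq_0_if_unreachable:
  assumes "has_generator K G" "u \<noteq> v" "\<And>t. 0 < t \<Longrightarrow> K t u v = 0"
  shows "G u v = 0"
proof (rule tendsto_unique[OF trivial_limit_at_right_real])
  show "((\<lambda>t. (K t u v - id_kernel u v) / t) \<longlongrightarrow> G u v) (at_right 0)"
    using assms(1) by (simp add: has_generator_def)
  have "\<forall>\<^sub>F t in at_right 0. (K t u v - id_kernel u v) / t = 0"
    using assms(2,3) by (intro eventually_mono[OF eventually_at_right_less]) simp
  then show "((\<lambda>t. (K t u v - id_kernel u v) / t) \<longlongrightarrow> 0) (at_right 0)"
    by (rule tendsto_eventually)
qed

section \<open>Poisson semigroups\<close>

definition poisson_weight :: "real \<Rightarrow> nat \<Rightarrow> real" where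
  "poisson_weight t n = exp (- t) * (t ^ n / fact n)"

text \<open>The semigroup \<open>exp (t (A - I))\<close> of the chain that jumps according to \<open>A\<close> at the times
  of a rate one Poisson process.\<close>
definition poisson_semigroup :: "('s::finite \<Rightarrow> 's \<Rightarrow> real) \<Rightarrow> real \<Rightarrow> 's \<Rightarrow> 's \<Rightarrow> real" where
  "poisson_semigroup A t x y = (\<Sum>n. poisson_weight t n * mpow A n x y)"

lemma poisson_weight_sums: "poisson_weight t sums 1"
proof -
  have "(\<lambda>n. t ^ n / fact n) sums exp t"
    using exp_converges[of t] by (simp add: divide_inverse mult.commute)
  then have "(\<lambda>n. exp (- t) * (t ^ n / fact n)) sums (exp (- t) * exp t)"
    by (rule sums_mult)
  moreover have "exp (- t) * exp t = 1"
    by (simp add: exp_minus)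
  ultimately show ?thesis
    unfolding poisson_weight_def by simp
qed

lemma summable_poisson_weight: "summable (poisson_weight t)"
  using poisson_weight_sums sums_summable by blast

lemma suminf_poisson_weight: "(\<Sum>n. poisson_weight t n) = 1"
  using poisson_weight_sums sums_unique by fastforce

lemma poisson_weight_nonneg: "0 \<le> t \<Longrightarrow> 0 \<le> poisson_weight t n"
  by (simp add: poisson_weight_def)

lemma poisson_weight_add:
  "poisson_weight (s + t) k = (\<Sum>i\<le>k. poisson_weight s i * poisson_weight t (k - i))"
proof -
  have "(s + t) ^ k / fact k = (\<Sum>i\<le>k. of_nat (k choose i) * s ^ i * t ^ (k - i) / fact k)"
    by (simp add: binomial_ring sum_divide_distrib)
  also have "\<dots> = (\<Sum>i\<le>k. (s ^ i / fact i) * (t ^ (k - i) / fact (k - i)))"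
    by (intro sum.cong refl) (simp add: binomial_fact field_simps)
  moreover have "exp (- (s + t)) = exp (- s) * exp (- t)"
    by (simp add: exp_add[symmetric])
  ultimately show ?thesis
    unfolding poisson_weight_def by (simp add: sum_distrib_left mult_ac)
qed

lemma poisson_weight_tail:
  "(\<Sum>n. poisson_weight t (n + 2)) = 1 - exp (- t) - t * exp (- t)"
proof -
  have "1 = (\<Sum>n. poisson_weight t (n + 2)) + poisson_weight t 1 + poisson_weight t 0"
    using suminf_split_initial_segment[OF summable_poisson_weight[of t], of 2]
    by (simp add: suminf_poisson_weight numeral_2_eq_2)
  moreover have "poisson_weight t 1 = t * exp (- t)" "poisson_weight t 0 = exp (- t)"
    by (simp_all add: poisson_weight_def)
  ultimately show ?thesis
    by linarith
qed

lemma summable_poisson_terms: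
  assumes A: "stochastic A" and t: "0 \<le> t"
  shows "summable (\<lambda>n. poisson_weight t n * mpow A n x y)"
proof (rule summable_comparison_test[OF _ summable_poisson_weight], intro exI allI impI)
  fix n
  have "\<bar>mpow A n x y\<bar> \<le> 1"
    using mpow_nonneg[OF A, of n x y] mpow_le_1[OF A, of n x y] by linarith
  then show "norm (poisson_weight t n * mpow A n x y) \<le> poisson_weight t n"
    unfolding real_norm_def abs_mult abs_of_nonneg[OF poisson_weight_nonneg[OF t]]
    by (rule mult_left_le) (rule poisson_weight_nonneg[OF t])
qed

lemma poisson_semigroup_0: "poisson_semigroup A 0 x y = id_kernel x y"
proof -
  have "(\<lambda>n. poisson_weight 0 n * mpow A n x y) = (\<lambda>n. if n = 0 then mpow A 0 x y else 0)"
    by (auto simp: poisson_weight_def fun_eq_iff)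
  moreover have "(\<lambda>n. if n = 0 then mpow A 0 x y else 0) sums (mpow A 0 x y)"
    by (rule sums_single)
  ultimately show ?thesis
    unfolding poisson_semigroup_def by (simp add: sums_iff)
qed

lemma poisson_semigroup_nonneg:
  assumes A: "stochastic A" and t: "0 \<le> t"
  shows "0 \<le> poisson_semigroup A t x y"
  unfolding poisson_semigroup_def
  by (rule suminf_nonneg[OF summable_poisson_terms[OF A t]])
     (simp add: poisson_weight_nonneg[OF t] mpow_nonneg[OF A])

lemma poisson_semigroup_row_sum:
  assumes A: "stochastic A" and t: "0 \<le> t"
  shows "(\<Sum>y\<in>UNIV. poisson_semigroup A t x y) = 1"
proof -
  have "(\<Sum>y\<in>UNIV. poisson_semigroup A t x y) = (\<Sum>n. \<Sum>y\<in>UNIV. poisson_weight t n * mpow A n x y)"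
    unfolding poisson_semigroup_def by (rule suminf_sum[symmetric]) (rule summable_poisson_terms[OF A t])
  also have "\<dots> = (\<Sum>n. poisson_weight t n)"
    by (simp add: sum_distrib_left[symmetric] stochastic_row_sum[OF stochastic_mpow[OF A]])
  finally show ?thesis
    by (simp add: suminf_poisson_weight)
qed

lemma stochastic_poisson_semigroup:
  assumes "stochastic A" "0 \<le> t"
  shows "stochastic (poisson_semigroup A t)"
  using poisson_semigroup_nonneg[OF assms] poisson_semigroup_row_sum[OF assms]
  by (simp add: stochastic_def)

lemma poisson_semigroup_add:
  assumes A: "stochastic A" and s: "0 \<le> s" and t: "0 \<le> t"
  shows "poisson_semigroup A (s + t) x y = (\<Sum>z\<in>UNIV. poisson_semigroup A s x z * poisson_semigroup A t z y)"
proof -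
  define a where "a z i = poisson_weight s i * mpow A i x z" for z i
  define b where "b z i = poisson_weight t i * mpow A i z y" for z i
  have "summable (\<lambda>i. norm (a z i))" "summable (\<lambda>i. norm (b z i))" for z
    using summable_poisson_terms[OF A s] summable_poisson_terms[OF A t] unfolding a_def b_def
    by (simp_all add: abs_mult poisson_weight_nonneg[OF s] poisson_weight_nonneg[OF t] mpow_nonneg[OF A])
  then have cauchy: "(\<lambda>k. \<Sum>i\<le>k. a z i * b z (k - i)) sums (poisson_semigroup A s x z * poisson_semigroup A t z y)" for z
    using Cauchy_product_sums unfolding a_def b_def poisson_semigroup_def by fastforce
  have convolution: "(\<Sum>z\<in>UNIV. \<Sum>i\<le>k. a z i * b z (k - i)) = poisson_weight (s + t) k * mpow A k x y" for k
  proof -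
    have "(\<Sum>z\<in>UNIV. \<Sum>i\<le>k. a z i * b z (k - i))
        = (\<Sum>i\<le>k. poisson_weight s i * poisson_weight t (k - i) * (\<Sum>z\<in>UNIV. mpow A i x z * mpow A (k - i) z y))"
      unfolding a_def b_def
      by (subst sum.swap) (intro sum.cong refl, simp add: sum_distrib_left mult_ac)
    also have "\<dots> = poisson_weight (s + t) k * mpow A k x y"
      by (simp add: mpow_add[symmetric] poisson_weight_add sum_distrib_right)
    finally show ?thesis .
  qed
  have "(\<Sum>z\<in>UNIV. poisson_semigroup A s x z * poisson_semigroup A t z y)
      = (\<Sum>k. \<Sum>z\<in>UNIV. \<Sum>i\<le>k. a z i * b z (k - i))"
    using cauchy by (simp add: sums_iff suminf_sum)
  then show ?thesis
    unfolding convolution poisson_semigroup_def by simp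
qed

text \<open>Only the jump terms with at least two jumps are neglected; their total weight is
  \<open>O(t\<^sup>2)\<close>.\<close>
lemma poisson_semigroup_first_order:
  assumes A: "stochastic A" and t: "0 \<le> t"
  shows "\<bar>poisson_semigroup A t x y - id_kernel x y - t * exp (- t) * (A x y - id_kernel x y)\<bar>
           \<le> 1 - exp (- t) - t * exp (- t)"
proof -
  define c where "c n = mpow A n x y - id_kernel x y" for n
  have c_bound: "\<bar>c n\<bar> \<le> 1" for n
    using mpow_nonneg[OF A, of n x y] mpow_le_1[OF A, of n x y] by (auto simp: c_def)
  have summable_c: "summable (\<lambda>n. poisson_weight t n * c n)"
    unfolding c_def right_diff_distrib
    by (intro summable_diff summable_poisson_terms[OF A t] summable_mult2 summable_poisson_weight)
  have "poisson_semigroup A t x y - id_kernel x y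
      = (\<Sum>n. poisson_weight t n * mpow A n x y) - (\<Sum>n. poisson_weight t n * id_kernel x y)"
    by (simp add: poisson_semigroup_def suminf_mult2[OF summable_poisson_weight, symmetric]
        suminf_poisson_weight)
  also have "\<dots> = (\<Sum>n. poisson_weight t n * c n)"
    by (subst suminf_diff[OF summable_poisson_terms[OF A t] summable_mult2[OF summable_poisson_weight]])
       (simp add: c_def algebra_simps)
  also have "\<dots> = (\<Sum>n. poisson_weight t (n + 2) * c (n + 2)) + t * exp (- t) * (A x y - id_kernel x y)"
    by (subst suminf_split_initial_segment[OF summable_c, of 2])
       (simp add: c_def numeral_2_eq_2 poisson_weight_def sum_mult_id_kernel_right)
  finally have "\<bar>poisson_semigroup A t x y - id_kernel x y - t * exp (- t) * (A x y - id_kernel x y)\<bar>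
      = \<bar>\<Sum>n. poisson_weight t (n + 2) * c (n + 2)\<bar>"
    by simp
  also have "\<dots> \<le> (\<Sum>n. poisson_weight t (n + 2))"
  proof -
    have "norm (\<Sum>n. poisson_weight t (n + 2) * c (n + 2)) \<le> (\<Sum>n. poisson_weight t (n + 2))"
    proof (rule norm_suminf_le)
      show "norm (poisson_weight t (n + 2) * c (n + 2)) \<le> poisson_weight t (n + 2)" for n
        unfolding real_norm_def abs_mult abs_of_nonneg[OF poisson_weight_nonneg[OF t]]
        by (rule mult_left_le[OF c_bound poisson_weight_nonneg[OF t]])
      show "summable (\<lambda>n. poisson_weight t (n + 2))"
        using summable_poisson_weight summable_iff_shift by blast
    qed
    then show ?thesis
      by simp
  qed
  finally show ?thesis
    unfolding poisson_weight_tail .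
qed

lemma has_generator_poisson_semigroup:
  assumes A: "stochastic A"
  shows "has_generator (poisson_semigroup A) (\<lambda>x y. A x y - id_kernel x y)"
  unfolding has_generator_def
proof (intro allI)
  fix x y
  define e where "e t = (1 - exp (- t) - t * exp (- t)) / t" for t :: real
  have e: "(e \<longlongrightarrow> 0) (at_right 0)"
    unfolding e_def by real_asymp
  have "\<forall>\<^sub>F t in at_right 0.
          norm ((poisson_semigroup A t x y - id_kernel x y) / t - exp (- t) * (A x y - id_kernel x y)) \<le> e t"
    using eventually_at_right_less[of "0::real"]
  proof eventually_elim
    case (elim t)
    have "(poisson_semigroup A t x y - id_kernel x y) / t - exp (- t) * (A x y - id_kernel x y)
        = (poisson_semigroup A t x y - id_kernel x y - t * exp (- t) * (A x y - id_kernel x y)) / t"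
      using elim by (simp add: field_simps)
    then show ?case
      using poisson_semigroup_first_order[OF A, of t x y] elim
      by (simp add: e_def abs_divide divide_right_mono)
  qed
  then have "((\<lambda>t. (poisson_semigroup A t x y - id_kernel x y) / t - exp (- t) * (A x y - id_kernel x y))
      \<longlongrightarrow> 0) (at_right 0)"
    by (rule Lim_null_comparison[OF _ e])
  then have "((\<lambda>t. ((poisson_semigroup A t x y - id_kernel x y) / t - exp (- t) * (A x y - id_kernel x y))
      + exp (- t) * (A x y - id_kernel x y)) \<longlongrightarrow> 0 + exp (- 0) * (A x y - id_kernel x y)) (at_right 0)"
    by (intro tendsto_intros)
  then show "((\<lambda>t. (poisson_semigroup A t x y - id_kernel x y) / t) \<longlongrightarrow> A x y - id_kernel x y) (at_right 0)"
    by simp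
qed

lemma poisson_semigroup_tendsto_id:
  assumes "stochastic A"
  shows "((\<lambda>t. poisson_semigroup A t x y) \<longlongrightarrow> id_kernel x y) (at_right 0)"
proof -
  have "((\<lambda>t. t * ((poisson_semigroup A t x y - id_kernel x y) / t) + id_kernel x y)
          \<longlongrightarrow> 0 * (A x y - id_kernel x y) + id_kernel x y) (at_right 0)"
    using has_generator_poisson_semigroup[OF assms] unfolding has_generator_def
    by (intro tendsto_intros) auto
  moreover have "\<forall>\<^sub>F t in at_right 0.
      t * ((poisson_semigroup A t x y - id_kernel x y) / t) + id_kernel x y = poisson_semigroup A t x y"
    using eventually_at_right_less[of "0::real"] by eventually_elim auto
  ultimately show ?thesis
    by (simp add: Lim_transform_eventually)
qed

lemma markov_semigroup_poisson_semigroup: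
  assumes A: "stochastic A" and h: "0 < h"
  shows "markov_semigroup (\<lambda>t. poisson_semigroup A (t / h))"
  unfolding markov_semigroup_def
proof (intro conjI allI impI)
  show "stochastic (poisson_semigroup A (t / h))" if "0 \<le> t" for t
    using that h by (intro stochastic_poisson_semigroup[OF A]) simp
  show "poisson_semigroup A (0 / h) x y = id_kernel x y" for x y
    by (simp add: poisson_semigroup_0)
  show "poisson_semigroup A ((s + t) / h) x y
      = (\<Sum>z\<in>UNIV. poisson_semigroup A (s / h) x z * poisson_semigroup A (t / h) z y)"
    if "0 \<le> s" "0 \<le> t" for s t x y
    using that h by (simp add: add_divide_distrib poisson_semigroup_add[OF A])
  show "((\<lambda>t. poisson_semigroup A (t / h) x y) \<longlongrightarrow> id_kernel x y) (at_right 0)" for x y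
    using filterlim_compose[OF poisson_semigroup_tendsto_id[OF A] filterlim_divide_at_right_0[OF h]]
    by (simp add: o_def)
qed

lemma has_generator_poisson_semigroup_rescaled:
  assumes A: "stochastic A" and h: "0 < h"
  shows "has_generator (\<lambda>t. poisson_semigroup A (t / h)) (\<lambda>x y. (A x y - id_kernel x y) / h)"
  unfolding has_generator_def
proof (intro allI)
  fix x y
  have "((\<lambda>t. (poisson_semigroup A (t / h) x y - id_kernel x y) / (t / h)) \<longlongrightarrow> A x y - id_kernel x y)
      (at_right 0)"
    using filterlim_compose[OF has_generator_poisson_semigroup[OF A, unfolded has_generator_def, rule_format]
        filterlim_divide_at_right_0[OF h]]
    by (simp add: o_def)
  then have "((\<lambda>t. (poisson_semigroup A (t / h) x y - id_kernel x y) / (t / h) / h)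
      \<longlongrightarrow> (A x y - id_kernel x y) / h) (at_right 0)"
    by (intro tendsto_intros) (use h in auto)
  then show "((\<lambda>t. (poisson_semigroup A (t / h) x y - id_kernel x y) / t) \<longlongrightarrow> (A x y - id_kernel x y) / h)
      (at_right 0)"
    using h by simp
qed

lemma lumpable_poisson_semigroup:
  fixes f :: "'u::finite \<Rightarrow> 's::finite"
  assumes K: "stochastic K" and lump: "lumpable K f P" and t: "0 \<le> t"
  shows "lumpable (poisson_semigroup K t) f (poisson_semigroup P t)"
  unfolding lumpable_def
proof (intro allI)
  fix \<eta> y
  have "(\<Sum>\<xi>\<in>{\<xi>. f \<xi> = y}. poisson_semigroup K t \<eta> \<xi>)
      = (\<Sum>n. \<Sum>\<xi>\<in>{\<xi>. f \<xi> = y}. poisson_weight t n * mpow K n \<eta> \<xi>)"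
    unfolding poisson_semigroup_def by (rule suminf_sum[symmetric]) (rule summable_poisson_terms[OF K t])
  also have "\<dots> = (\<Sum>n. poisson_weight t n * mpow P n (f \<eta>) y)"
    using lumpable_mpow[OF lump] by (simp add: lumpable_def sum_distrib_left[symmetric])
  finally show "(\<Sum>\<xi>\<in>{\<xi>. f \<xi> = y}. poisson_semigroup K t \<eta> \<xi>) = poisson_semigroup P t (f \<eta>) y"
    by (simp add: poisson_semigroup_def)
qed

lemma poisson_semigroup_pos_imp_mpow_pos:
  assumes A: "stochastic A" and pos: "0 < poisson_semigroup A t x y"
  shows "\<exists>n. 0 < mpow A n x y"
proof (rule ccontr)
  assume "\<nexists>n. 0 < mpow A n x y"
  then have "mpow A n x y = 0" for n
    using mpow_nonneg[OF A, of n x y] by (meson antisym not_less)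
  then show False
    using pos by (simp add: poisson_semigroup_def)
qed

section \<open>Monotone couplings and realizations\<close>

definition monotone_coupling ::
  "('a::{order,finite} \<Rightarrow> 'a \<Rightarrow> real) \<Rightarrow> 'a \<Rightarrow> 'a \<Rightarrow> ('a \<times> 'a \<Rightarrow> real) \<Rightarrow> bool" where
  "monotone_coupling M w z p \<longleftrightarrow>
     (\<forall>v. 0 \<le> p v) \<and>
     (\<forall>c. (\<Sum>v\<in>{v. fst v = c}. p v) = M w c) \<and>
     (\<forall>c. (\<Sum>v\<in>{v. snd v = c}. p v) = M z c) \<and>
     (\<forall>v. \<not> fst v \<le> snd v \<longrightarrow> p v = 0)"

text \<open>The infinitesimal version: the jump rates out of \<open>(w, z)\<close> of a coupling of the chains
  with rate matrix \<open>Q\<close> started at \<open>w\<close> and \<open>z\<close> that stays in \<open>{a \<le> b}\<close>.\<close>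
definition monotone_coupling_rates ::
  "('a::{order,finite} \<Rightarrow> 'a \<Rightarrow> real) \<Rightarrow> 'a \<Rightarrow> 'a \<Rightarrow> ('a \<times> 'a \<Rightarrow> real) \<Rightarrow> bool" where
  "monotone_coupling_rates Q w z r \<longleftrightarrow>
     (\<forall>v. v \<noteq> (w, z) \<longrightarrow> 0 \<le> r v) \<and>
     (\<forall>c. (\<Sum>v\<in>{v. fst v = c}. r v) = Q w c) \<and>
     (\<forall>c. (\<Sum>v\<in>{v. snd v = c}. r v) = Q z c) \<and>
     (\<forall>v. \<not> fst v \<le> snd v \<longrightarrow> r v = 0)"

text \<open>Differentiating a monotone coupling of the continuous-time chains at time \<open>0\<close>.\<close>
lemma ct_stoch_monotone_coupling_rates:
  fixes P :: "real \<Rightarrow> 'a::{order,finite} \<Rightarrow> 'a \<Rightarrow> real"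
  assumes P: "markov_semigroup P" and Q: "has_generator P Q" and mono: "ct_stoch_monotone P"
    and wz: "w \<le> z"
  shows "\<exists>r. monotone_coupling_rates Q w z r"
proof -
  obtain K where K: "markov_semigroup K"
    and fst: "image_markov K (w, z) fst (\<lambda>t. 0 \<le> t) P w"
    and snd: "image_markov K (w, z) snd (\<lambda>t. 0 \<le> t) P z"
    and always: "as_always K (w, z) (\<lambda>t. 0 \<le> t) (\<lambda>(a, b). a \<le> b)"
    using mono wz unfolding ct_stoch_monotone_def by blast
  obtain G where G: "has_generator K G"
    using markov_semigroup_has_generator[OF K] by blast
  have "G (w, z) v = 0" if "\<not> fst v \<le> snd v" for v
  proof (rule has_generator_eq_0_if_unreachable[OF G])
    show "(w, z) \<noteq> v"
      using wz that by auto
    show "K t (w, z) v = 0" if "0 < t" for t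
    proof -
      have "\<not> 0 < K t (w, z) v"
        using always[unfolded as_always_def, rule_format, OF less_imp_le[OF that], of v]
          \<open>\<not> fst v \<le> snd v\<close>
        by (cases v) auto
      then show ?thesis
        using markov_semigroup_nonneg[OF K, of t "(w, z)" v] that by linarith
    qed
  qed
  then have "monotone_coupling_rates Q w z (G (w, z))"
    unfolding monotone_coupling_rates_def
    using has_generator_off_diagonal_nonneg[OF K G] has_generator_fibre_sum[OF G Q fst]
      has_generator_fibre_sum[OF G Q snd]
    by (auto simp: eq_commute[of _ "(w, z)"])
  then show ?thesis
    by blast
qed

lemma monotone_coupling_euler_step:
  assumes r: "monotone_coupling_rates Q w z r" and wz: "w \<le> z"
    and h: "0 \<le> h" "0 \<le> 1 + h * r (w, z)"
  shows "monotone_coupling (\<lambda>x y. id_kernel x y + h * Q x y) w z (\<lambda>v. id_kernel (w, z) v + h * r v)"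
  unfolding monotone_coupling_def
proof (intro conjI allI impI)
  show "0 \<le> id_kernel (w, z) v + h * r v" for v
  proof (cases "v = (w, z)")
    case True
    then show ?thesis
      using h by simp
  next
    case False
    then have "0 \<le> r v"
      using r unfolding monotone_coupling_rates_def by blast
    then show ?thesis
      using h False by simp
  qed
  show "(\<Sum>v\<in>{v. fst v = c}. id_kernel (w, z) v + h * r v) = id_kernel w c + h * Q w c" for c
    using r unfolding monotone_coupling_rates_def by (simp add: sum.distrib sum_distrib_left[symmetric])
  show "(\<Sum>v\<in>{v. snd v = c}. id_kernel (w, z) v + h * r v) = id_kernel z c + h * Q z c" for c
    using r unfolding monotone_coupling_rates_def by (simp add: sum.distrib sum_distrib_left[symmetric])
  show "id_kernel (w, z) v + h * r v = 0" if "\<not> fst v \<le> snd v" for v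
  proof -
    have "r v = 0"
      using r that unfolding monotone_coupling_rates_def by blast
    moreover have "(w, z) \<noteq> v"
      using wz that by auto
    ultimately show ?thesis
      by simp
  qed
qed

lemma stochastic_euler_step:
  fixes Q :: "'s::finite \<Rightarrow> 's \<Rightarrow> real"
  assumes off_diagonal: "\<And>x y. x \<noteq> y \<Longrightarrow> 0 \<le> Q x y" and row_sum: "\<And>x. (\<Sum>y\<in>UNIV. Q x y) = 0"
    and h: "0 \<le> h" "\<And>x. 0 \<le> 1 + h * Q x x"
  shows "stochastic (\<lambda>x y. id_kernel x y + h * Q x y)"
  unfolding stochastic_def
proof (intro conjI allI)
  show "0 \<le> id_kernel x y + h * Q x y" for x y
    using off_diagonal[of x y] h by (cases "x = y") auto
  show "(\<Sum>y\<in>UNIV. id_kernel x y + h * Q x y) = 1" for x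
    by (simp add: sum.distrib sum_distrib_left[symmetric] row_sum)
qed

lemma sum_fst_fibre:
  fixes g :: "'a::finite \<times> 'b::finite \<Rightarrow> real"
  shows "(\<Sum>v\<in>{v. fst v = c}. g v) = (\<Sum>d\<in>UNIV. g (c, d))"
proof -
  have "{v. fst v = c} = (\<lambda>d. (c, d)) ` UNIV"
    by auto
  then have "(\<Sum>v\<in>{v. fst v = c}. g v) = sum g ((\<lambda>d. (c, d)) ` UNIV)"
    by (rule arg_cong)
  also have "\<dots> = sum (g \<circ> (\<lambda>d. (c, d))) UNIV"
    by (rule sum.reindex) (auto simp: inj_on_def)
  finally show ?thesis
    by (simp add: o_def)
qed

lemma sum_snd_fibre:
  fixes g :: "'a::finite \<times> 'b::finite \<Rightarrow> real"
  shows "(\<Sum>v\<in>{v. snd v = c}. g v) = (\<Sum>a\<in>UNIV. g (a, c))"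
proof -
  have "{v. snd v = c} = (\<lambda>a. (a, c)) ` UNIV"
    by auto
  then have "(\<Sum>v\<in>{v. snd v = c}. g v) = sum g ((\<lambda>a. (a, c)) ` UNIV)"
    by (rule arg_cong)
  also have "\<dots> = sum (g \<circ> (\<lambda>a. (a, c))) UNIV"
    by (rule sum.reindex) (auto simp: inj_on_def)
  finally show ?thesis
    by (simp add: o_def)
qed

definition pair_kernel ::
  "('a::order \<Rightarrow> 'a \<Rightarrow> real) \<Rightarrow> ('a \<Rightarrow> 'a \<Rightarrow> 'a \<times> 'a \<Rightarrow> real) \<Rightarrow> 'a \<times> 'a \<Rightarrow> 'a \<times> 'a \<Rightarrow> real" where
  "pair_kernel M C u v =
     (if fst u \<le> snd u then C (fst u) (snd u) v else M (fst u) (fst v) * M (snd u) (snd v))"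

context
  fixes M :: "'a::{order,finite} \<Rightarrow> 'a \<Rightarrow> real" and C :: "'a \<Rightarrow> 'a \<Rightarrow> 'a \<times> 'a \<Rightarrow> real"
  assumes M: "stochastic M" and C: "\<And>w z. w \<le> z \<Longrightarrow> monotone_coupling M w z (C w z)"
begin

lemma lumpable_pair_kernel_fst: "lumpable (pair_kernel M C) fst M"
  unfolding lumpable_def
proof (intro allI)
  fix u :: "'a \<times> 'a" and c
  show "(\<Sum>v\<in>{v. fst v = c}. pair_kernel M C u v) = M (fst u) c"
  proof (cases "fst u \<le> snd u")
    case True
    then show ?thesis
      using C[OF True] by (simp add: pair_kernel_def monotone_coupling_def)
  next
    case False
    then have "(\<Sum>v\<in>{v. fst v = c}. pair_kernel M C u v) = (\<Sum>d\<in>UNIV. M (fst u) c * M (snd u) d)"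
      by (simp add: pair_kernel_def sum_fst_fibre)
    then show ?thesis
      by (simp add: sum_distrib_left[symmetric] stochastic_row_sum[OF M])
  qed
qed

lemma lumpable_pair_kernel_snd: "lumpable (pair_kernel M C) snd M"
  unfolding lumpable_def
proof (intro allI)
  fix u :: "'a \<times> 'a" and c
  show "(\<Sum>v\<in>{v. snd v = c}. pair_kernel M C u v) = M (snd u) c"
  proof (cases "fst u \<le> snd u")
    case True
    then show ?thesis
      using C[OF True] by (simp add: pair_kernel_def monotone_coupling_def)
  next
    case False
    then have "(\<Sum>v\<in>{v. snd v = c}. pair_kernel M C u v) = (\<Sum>a\<in>UNIV. M (fst u) a * M (snd u) c)"
      by (simp add: pair_kernel_def sum_snd_fibre)
    then show ?thesis
      by (simp add: sum_distrib_right[symmetric] stochastic_row_sum[OF M])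
  qed
qed

lemma stochastic_pair_kernel: "stochastic (pair_kernel M C)"
  unfolding stochastic_def
proof (intro conjI allI)
  show "0 \<le> pair_kernel M C u v" for u v
    using C[of "fst u" "snd u"] stochastic_nonneg[OF M] unfolding pair_kernel_def monotone_coupling_def
    by (cases v) (simp add: mult_nonneg_nonneg)
  show "(\<Sum>v\<in>UNIV. pair_kernel M C u v) = 1" for u
    using sum_over_fibres[where f = fst and g = "pair_kernel M C u"]
    by (simp add: lumpable_pair_kernel_fst[unfolded lumpable_def, rule_format] stochastic_row_sum[OF M])
qed

lemma pair_kernel_preserves_order:
  assumes "fst u \<le> snd u" "0 < pair_kernel M C u v"
  shows "fst v \<le> snd v"
proof (rule ccontr)
  assume "\<not> fst v \<le> snd v"
  then have "C (fst u) (snd u) v = 0"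
    using C[OF assms(1)] unfolding monotone_coupling_def by blast
  then show False
    using assms by (simp add: pair_kernel_def)
qed

lemma dt_stoch_monotoneI: "dt_stoch_monotone M"
  unfolding dt_stoch_monotone_def
proof (intro allI impI exI conjI)
  fix w z :: 'a
  assume "w \<le> z"
  show "stochastic (pair_kernel M C)"
    by (rule stochastic_pair_kernel)
  show "image_markov (mpow (pair_kernel M C)) (w, z) fst (\<lambda>_. True) (mpow M) w"
    using image_markov_lumpable[where adm = "\<lambda>_. True" and u = "(w, z)",
        OF lumpable_mpow[OF lumpable_pair_kernel_fst]]
    by simp
  show "image_markov (mpow (pair_kernel M C)) (w, z) snd (\<lambda>_. True) (mpow M) z"
    using image_markov_lumpable[where adm = "\<lambda>_. True" and u = "(w, z)",
        OF lumpable_mpow[OF lumpable_pair_kernel_snd]]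
    by simp
  show "as_always (mpow (pair_kernel M C)) (w, z) (\<lambda>_. True) (\<lambda>(a, b). a \<le> b)"
    unfolding as_always_def
  proof (intro allI impI)
    fix n v
    assume pos: "0 < mpow (pair_kernel M C) n (w, z) v"
    have "fst v \<le> snd v"
    proof (rule mpow_preserves_invariant[where Inv = "\<lambda>u. fst u \<le> snd u" and A = "pair_kernel M C"])
      show "fst v' \<le> snd v'" if "fst u \<le> snd u" "0 < pair_kernel M C u v'" for u v'
        using that by (rule pair_kernel_preserves_order)
      show "fst (w, z) \<le> snd (w, z)"
        using \<open>w \<le> z\<close> by simp
    qed (use stochastic_pair_kernel pos in simp_all)
    then show "case v of (a, b) \<Rightarrow> a \<le> b"
      by (simp add: case_prod_beta)
  qed
qed

end

lemma dt_realizably_monotone_random_map: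
  fixes M :: "'a::{order,finite} \<Rightarrow> 'a \<Rightarrow> real"
  assumes "dt_realizably_monotone M"
  obtains \<mu> where "\<And>\<xi>. 0 \<le> \<mu> \<xi>" "(\<Sum>\<xi>\<in>UNIV. \<mu> \<xi>) = 1"
    "\<And>z y. (\<Sum>\<xi>\<in>{\<xi>. \<xi> z = y}. \<mu> \<xi>) = M z y" "\<And>\<xi>. 0 < \<mu> \<xi> \<Longrightarrow> mono \<xi>"
proof -
  obtain K :: "('a \<Rightarrow> 'a) \<Rightarrow> ('a \<Rightarrow> 'a) \<Rightarrow> real" where K: "stochastic K"
    and image: "\<And>z. image_markov (mpow K) id (\<lambda>\<xi>. \<xi> z) (\<lambda>_. True) (mpow M) z"
    and always: "as_always (mpow K) id (\<lambda>_. True) mono"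
    using assms unfolding dt_realizably_monotone_def by blast
  show ?thesis
  proof
    show "0 \<le> K id \<xi>" "(\<Sum>\<xi>\<in>UNIV. K id \<xi>) = 1" for \<xi>
      using K by (simp_all add: stochastic_nonneg stochastic_row_sum)
    show "(\<Sum>\<xi>\<in>{\<xi>. \<xi> z = y}. K id \<xi>) = M z y" for z y
      using image_markov_fibre_sum[OF image[of z], of "Suc 0" y] by (simp only: mpow_1)
    show "mono \<xi>" if "0 < K id \<xi>" for \<xi>
      using always that unfolding as_always_def by (metis mpow_1)
  qed
qed

definition compose_kernel :: "(('a \<Rightarrow> 'a) \<Rightarrow> real) \<Rightarrow> ('a \<Rightarrow> 'a) \<Rightarrow> ('a \<Rightarrow> 'a) \<Rightarrow> real" where
  "compose_kernel \<mu> \<eta> \<xi> = (\<Sum>\<zeta>\<in>{\<zeta>. \<zeta> \<circ> \<eta> = \<xi>}. \<mu> \<zeta>)"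

lemma stochastic_compose_kernel:
  fixes \<mu> :: "('a::finite \<Rightarrow> 'a) \<Rightarrow> real"
  assumes "\<And>\<xi>. 0 \<le> \<mu> \<xi>" "(\<Sum>\<xi>\<in>UNIV. \<mu> \<xi>) = 1"
  shows "stochastic (compose_kernel \<mu>)"
  unfolding stochastic_def compose_kernel_def
proof (intro conjI allI)
  show "0 \<le> (\<Sum>\<zeta>\<in>{\<zeta>. \<zeta> \<circ> \<eta> = \<xi>}. \<mu> \<zeta>)" for \<eta> \<xi>
    using assms(1) by (simp add: sum_nonneg)
  show "(\<Sum>\<xi>\<in>UNIV. \<Sum>\<zeta>\<in>{\<zeta>. \<zeta> \<circ> \<eta> = \<xi>}. \<mu> \<zeta>) = 1" for \<eta> :: "'a \<Rightarrow> 'a"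
    using sum_over_fibres[where f = "\<lambda>\<zeta>. \<zeta> \<circ> \<eta>" and g = \<mu>] assms(2) by simp
qed

lemma lumpable_compose_kernel:
  fixes \<mu> :: "('a::finite \<Rightarrow> 'a) \<Rightarrow> real"
  assumes marginal: "\<And>z y. (\<Sum>\<xi>\<in>{\<xi>. \<xi> z = y}. \<mu> \<xi>) = M z y"
  shows "lumpable (compose_kernel \<mu>) (\<lambda>\<xi>. \<xi> z) M"
  unfolding lumpable_def
proof (intro allI)
  fix \<eta> :: "'a \<Rightarrow> 'a" and y
  have "(\<Sum>\<xi>\<in>{\<xi>. \<xi> z = y}. compose_kernel \<mu> \<eta> \<xi>)
      = (\<Sum>\<xi>\<in>{\<xi>. \<xi> z = y}. sum \<mu> {\<zeta> \<in> {\<zeta>. \<zeta> (\<eta> z) = y}. \<zeta> \<circ> \<eta> = \<xi>})"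
    unfolding compose_kernel_def by (intro sum.cong refl arg_cong[where f="sum \<mu>"]) auto
  also have "\<dots> = sum \<mu> {\<zeta>. \<zeta> (\<eta> z) = y}"
    by (rule sum.group) auto
  finally show "(\<Sum>\<xi>\<in>{\<xi>. \<xi> z = y}. compose_kernel \<mu> \<eta> \<xi>) = M (\<eta> z) y"
    by (simp add: marginal)
qed

lemma compose_kernel_preserves_mono:
  fixes \<mu> :: "('a::order \<Rightarrow> 'a) \<Rightarrow> real"
  assumes "\<And>\<zeta>. 0 < \<mu> \<zeta> \<Longrightarrow> mono \<zeta>" "mono \<eta>" "0 < compose_kernel \<mu> \<eta> \<xi>"
  shows "mono \<xi>"
proof -
  obtain \<zeta> where "\<zeta> \<circ> \<eta> = \<xi>" "0 < \<mu> \<zeta>"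
    using sum_pos_imp_ex_pos[of \<mu>] assms(3) unfolding compose_kernel_def by blast
  then show ?thesis
    using assms(1,2) by (auto simp: mono_def)
qed

text \<open>Apply the random monotone maps realizing \<open>M\<close> at the jump times of a Poisson process
  of rate \<open>1 / h\<close>.\<close>
lemma ct_realizably_monotone_poisson_semigroup:
  fixes M :: "'a::{order,finite} \<Rightarrow> 'a \<Rightarrow> real"
  assumes M: "stochastic M" "dt_realizably_monotone M" and h: "0 < h"
    and P: "\<And>t. 0 \<le> t \<Longrightarrow> P t = poisson_semigroup M (t / h)"
  shows "ct_realizably_monotone P"
proof -
  obtain \<mu> where \<mu>: "\<And>\<xi>. 0 \<le> \<mu> \<xi>" "(\<Sum>\<xi>\<in>UNIV. \<mu> \<xi>) = 1"
    "\<And>z y. (\<Sum>\<xi>\<in>{\<xi>. \<xi> z = y}. \<mu> \<xi>) = M z y" "\<And>\<xi>. 0 < \<mu> \<xi> \<Longrightarrow> mono \<xi>"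
    using dt_realizably_monotone_random_map[OF M(2)] by blast
  define K where "K = compose_kernel \<mu>"
  have K: "stochastic K"
    unfolding K_def by (rule stochastic_compose_kernel[OF \<mu>(1,2)])
  have "lumpable (poisson_semigroup K (t / h)) (\<lambda>\<xi>. \<xi> z) (P t)" if "0 \<le> t" for t z
    using lumpable_poisson_semigroup[OF K lumpable_compose_kernel[OF \<mu>(3), folded K_def]
        divide_nonneg_pos[OF that h]] P[OF that]
    by simp
  then have "image_markov (\<lambda>t. poisson_semigroup K (t / h)) id (\<lambda>\<xi>. \<xi> z) (\<lambda>t. 0 \<le> t) P z" for z
    using image_markov_lumpable[of "\<lambda>t. 0 \<le> t" "\<lambda>t. poisson_semigroup K (t / h)" "\<lambda>\<xi>. \<xi> z" P id]
    by simp
  moreover have "mono \<xi>" if pos: "0 < poisson_semigroup K (t / h) id \<xi>" for t \<xi>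
  proof -
    obtain n where "0 < mpow K n id \<xi>"
      using poisson_semigroup_pos_imp_mpow_pos[OF K pos] by blast
    then show ?thesis
    proof (rule mpow_preserves_invariant[where Inv = mono and A = K, rotated 3])
      show "mono \<xi>'" if "mono \<eta>" "0 < K \<eta> \<xi>'" for \<eta> \<xi>'
        using compose_kernel_preserves_mono[OF \<mu>(4)] that unfolding K_def by blast
    qed (use K in \<open>simp_all add: mono_def\<close>)
  qed
  ultimately show ?thesis
    unfolding ct_realizably_monotone_def as_always_def
    using markov_semigroup_poisson_semigroup[OF K h] by blast
qed

lemma eventually_nonneg_one_plus_mult: "\<forall>\<^sub>F h in at_right 0. 0 \<le> 1 + h * (a::real)"
proof -
  have "((\<lambda>h. 1 + h * a) \<longlongrightarrow> 1 + 0 * a) (at_right 0)"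
    by (intro tendsto_intros)
  then have "\<forall>\<^sub>F h in at_right 0. 0 < 1 + h * a"
    by (rule order_tendstoD(1)) simp
  then show ?thesis
    by eventually_elim simp
qed

lemma ct_stoch_monotone_euler_step:
  fixes P :: "real \<Rightarrow> 'a::{order,finite} \<Rightarrow> 'a \<Rightarrow> real"
  assumes P: "markov_semigroup P" and Q: "has_generator P Q" and mono: "ct_stoch_monotone P"
  obtains h where "0 < h" "stochastic (\<lambda>x y. id_kernel x y + h * Q x y)"
    "dt_stoch_monotone (\<lambda>x y. id_kernel x y + h * Q x y)"
proof -
  obtain R where R: "\<And>w z. w \<le> z \<Longrightarrow> monotone_coupling_rates Q w z (R w z)"
    using ct_stoch_monotone_coupling_rates[OF P Q mono] by metis
  have "\<forall>\<^sub>F h in at_right 0. 0 < h \<and> (\<forall>x. 0 \<le> 1 + h * Q x x) \<and> (\<forall>w z. 0 \<le> 1 + h * R w z (w, z))"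
    by (intro eventually_conj eventually_at_right_less eventually_all_finite eventually_nonneg_one_plus_mult)
  then obtain h where h: "0 < h" "\<And>x. 0 \<le> 1 + h * Q x x" "\<And>w z. 0 \<le> 1 + h * R w z (w, z)"
    using eventually_happens'[OF trivial_limit_at_right_real] by blast
  have M: "stochastic (\<lambda>x y. id_kernel x y + h * Q x y)"
    using has_generator_off_diagonal_nonneg[OF P Q] has_generator_row_sum[OF P Q] h
    by (intro stochastic_euler_step) auto
  moreover have "dt_stoch_monotone (\<lambda>x y. id_kernel x y + h * Q x y)"
  proof (rule dt_stoch_monotoneI[OF M])
    show "monotone_coupling (\<lambda>x y. id_kernel x y + h * Q x y) w z (\<lambda>v. id_kernel (w, z) v + h * R w z v)"
      if "w \<le> z" for w z
      using R[OF that] that less_imp_le[OF h(1)] h(3) by (rule monotone_coupling_euler_step)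
  qed
  ultimately show ?thesis
    using that h(1) by blast
qed

theorem mainTheorem3:
  assumes "\<forall>P :: 'a::{order,finite} \<Rightarrow> 'a \<Rightarrow> real.
             stochastic P \<and> dt_stoch_monotone P \<longrightarrow> dt_realizably_monotone P"
  shows "\<forall>P :: real \<Rightarrow> 'a \<Rightarrow> 'a \<Rightarrow> real.
             markov_semigroup P \<and> ct_stoch_monotone P \<longrightarrow> ct_realizably_monotone P"
proof (intro allI impI, elim conjE)
  fix P :: "real \<Rightarrow> 'a \<Rightarrow> 'a \<Rightarrow> real"
  assume P: "markov_semigroup P" and mono: "ct_stoch_monotone P"
  obtain Q where Q: "has_generator P Q"
    using markov_semigroup_has_generator[OF P] by blast
  obtain h where h: "0 < h" and M: "stochastic (\<lambda>x y. id_kernel x y + h * Q x y)"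
    and "dt_stoch_monotone (\<lambda>x y. id_kernel x y + h * Q x y)"
    using ct_stoch_monotone_euler_step[OF P Q mono] by blast
  then have realizable: "dt_realizably_monotone (\<lambda>x y. id_kernel x y + h * Q x y)"
    using assms by blast
  have "has_generator (\<lambda>t. poisson_semigroup (\<lambda>x y. id_kernel x y + h * Q x y) (t / h)) Q"
    using has_generator_poisson_semigroup_rescaled[OF M h] h by simp
  then have "P t = poisson_semigroup (\<lambda>x y. id_kernel x y + h * Q x y) (t / h)" if "0 \<le> t" for t
    using markov_semigroup_generator_unique[OF P markov_semigroup_poisson_semigroup[OF M h] Q] that
    by (intro ext) blast
  then show "ct_realizably_monotone P"
    by (rule ct_realizably_monotone_poisson_semigroup[OF M realizable h])
qed

end
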